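(* Let $s\ge2$, $1\le t\le k-1$, $N$ a positive multiple of $s^t$, $\lambda=N/s^t$, and let $p_{\max}$ be a positive integer with $\lambda/s^{k-t}\le p_{\max}\le\lambda$ and $p_{\max}\ne\lambda/s^{k-t}$. Then $G(k,s,t)^{\rm LP}=G_{P_{A'(k,s,t)^{\top}}}$.
   Context: Variables $x_{\mathbf{i}}$ are indexed by $\mathbf{i}=(i_1,\dots,i_k)\in\{0,\dots,s-1\}^k$. The LP relaxation of ILP (OA) is: minimize $\sum_{\mathbf i}x_{\mathbf i}$ subject to, for every $t$-subset $J\subseteq\{1,\dots,k\}$ and every $a\in\{0,\dots,s-1\}^J$, $\sum_{\mathbf i:\ i_j=a_j\ \forall j\in J}x_{\mathbf i}=\lambda$, and $0\le x_{\mathbf i}\le p_{\max}$. With feasible set $\mathcal F$, $G(k,s,t)^{\rm LP}$ is the set of permutations $\pi$ of the index set $\{0,\dots,s-1\}^k$ with $\pi(x)\in\mathcal F$ and equal objective value for all $x\in\mathcal F$, where $\pi(x)_{\mathbf i}=x_{\pi^{-1}(\mathbf i)}$. $A'(k,s,t)$ is the matrix whose rows are the coefficient vectors of the equalities $\sum_{\mathbf i:\ i_j=a_j\ \forall j\in J}x_{\mathbf i}=N/s^q$ for all $q\in\{0,\dots,t\}$, all $q$-subsets $J\subseteq\{1,\dots,k\}$ and all $a\in\{0,\dots,s-2\}^J$ (the case $q=0$ being $\sum_{\mathbf i}x_{\mathbf i}=N$). $P_{A'(k,s,t)^{\top}}$ is the $s^k\times s^k$ orthogonal projection matrix onto the row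 space of $A'(k,s,t)$, and for a square matrix $M$ indexed by $\{0,\dots,s-1\}^k$, $G_M=\{\pi:\Pi M\Pi^{\top}=M\}$ where $\Pi$ is the permutation matrix of $\pi$. *)

theory Defs
  imports Complex_Main "HOL-Combinatorics.Permutations" "HOL-Library.FuncSet"
begin

text \<open>Index set \<open>{0,...,s-1}^k\<close>, realised as lists of length k; coordinate j in 1..k
  of the paper is list position j-1 in 0..k-1.\<close>
definition idx :: "nat \<Rightarrow> nat \<Rightarrow> nat list set" where
  "idx k s = {i. length i = k \<and> (\<forall>j<k. i ! j < s)}"

definition cell :: "nat \<Rightarrow> nat \<Rightarrow> nat set \<Rightarrow> (nat \<Rightarrow> nat) \<Rightarrow> nat list set" where
  "cell k s J a = {i \<in> idx k s. \<forall>j\<in>J. i ! j = a j}"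

definition LP_feasible :: "nat \<Rightarrow> nat \<Rightarrow> nat \<Rightarrow> real \<Rightarrow> real \<Rightarrow> (nat list \<Rightarrow> real) set" where
  "LP_feasible k s t lam pmax =
     {x. (\<forall>i. i \<notin> idx k s \<longrightarrow> x i = 0)
       \<and> (\<forall>i\<in>idx k s. 0 \<le> x i \<and> x i \<le> pmax)
       \<and> (\<forall>J a. J \<subseteq> {0..<k} \<and> card J = t \<and> a \<in> PiE J (\<lambda>_. {0..<s})
               \<longrightarrow> (\<Sum>i\<in>cell k s J a. x i) = lam)}"

definition perm_vec :: "(nat list \<Rightarrow> nat list) \<Rightarrow> (nat list \<Rightarrow> real) \<Rightarrow> (nat list \<Rightarrow> real)" where
  "perm_vec \<pi> x = (\<lambda>i. x (inv \<pi> i))"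

definition G_LP :: "nat \<Rightarrow> nat \<Rightarrow> nat \<Rightarrow> real \<Rightarrow> real \<Rightarrow> (nat list \<Rightarrow> nat list) set" where
  "G_LP k s t lam pmax =
     {\<pi>. \<pi> permutes idx k s \<and>
         (\<forall>x\<in>LP_feasible k s t lam pmax.
            perm_vec \<pi> x \<in> LP_feasible k s t lam pmax \<and>
            (\<Sum>i\<in>idx k s. perm_vec \<pi> x i) = (\<Sum>i\<in>idx k s. x i))}"

definition Aprime_rows :: "nat \<Rightarrow> nat \<Rightarrow> nat \<Rightarrow> (nat set \<times> (nat \<Rightarrow> nat)) set" where
  "Aprime_rows k s t = {(J, a). J \<subseteq> {0..<k} \<and> card J \<le> t \<and> a \<in> PiE J (\<lambda>_. {0..s-2})}"

definition Aprime_row :: "nat \<Rightarrow> nat \<Rightarrow> nat set \<times> (nat \<Rightarrow> nat) \<Rightarrow> nat list \<Rightarrow> real" where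
  "Aprime_row k s r = (\<lambda>i. if i \<in> cell k s (fst r) (snd r) then 1 else 0)"

definition row_space :: "nat \<Rightarrow> nat \<Rightarrow> nat \<Rightarrow> (nat list \<Rightarrow> real) set" where
  "row_space k s t = {(\<lambda>i. \<Sum>r\<in>Aprime_rows k s t. c r * Aprime_row k s r i) | c. True}"

definition orth_proj :: "'a set \<Rightarrow> ('a \<Rightarrow> real) set \<Rightarrow> ('a \<Rightarrow> real) \<Rightarrow> ('a \<Rightarrow> real)" where
  "orth_proj I V y = (THE v. v \<in> V \<and> (\<forall>w\<in>V. (\<Sum>i\<in>I. (y i - v i) * w i) = 0))"

definition P_Aprime :: "nat \<Rightarrow> nat \<Rightarrow> nat \<Rightarrow> nat list \<Rightarrow> nat list \<Rightarrow> real" where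
  "P_Aprime k s t = (\<lambda>i j. orth_proj (idx k s) (row_space k s t)
                              (\<lambda>l. if l = j then 1 else 0) i)"

text \<open>\<open>G_M = {\<pi> : \<Pi> M \<Pi>^T = M}\<close>; \<open>(\<Pi> M \<Pi>^T)_{a,b} = M_{\<pi>^{-1}a, \<pi>^{-1}b}\<close>.\<close>
definition G_mat :: "nat \<Rightarrow> nat \<Rightarrow> (nat list \<Rightarrow> nat list \<Rightarrow> real) \<Rightarrow> (nat list \<Rightarrow> nat list) set" where
  "G_mat k s M = {\<pi>. \<pi> permutes idx k s \<and>
      (\<forall>a\<in>idx k s. \<forall>b\<in>idx k s. M (inv \<pi> a) (inv \<pi> b) = M a b)}"

end

theory Submission
  imports Defs "HOL-Combinatorics.Cycles"
begin

(* The LP feasible set is the box [0, pmax]^I cut by the affine space x0 + W, where x0 is the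
   constant vector lambda / s^(k-t) and W is the orthogonal complement of the row space V of A':
   the indicator of a cell using the value s - 1 is the indicator of a coarser cell minus those
   of the cells using smaller values, so the t-marginal equalities over all values {0..s-1} are
   equivalent to the rows of A'. As 0 < lambda / s^(k-t) < pmax, x0 is an interior point of the
   box, so a coordinate permutation preserves the feasible set iff it preserves W (perturb x0
   along W); the objective is invariant under every permutation. Permutation matrices are
   orthogonal, so preserving W is the same as preserving V, which is the same as commuting with
   the orthogonal projection onto V, i.e. fixing P_{A'^T}. *)

section \<open>Orthogonal projection onto a finitely generated subspace\<close>

definition inner_on :: "'a set \<Rightarrow> ('a \<Rightarrow> real) \<Rightarrow> ('a \<Rightarrow> real) \<Rightarrow> real" where
  "inner_on I x y = (\<Sum>i\<in>I. x i * y i)"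

definition span_of :: "'r set \<Rightarrow> ('r \<Rightarrow> 'a \<Rightarrow> real) \<Rightarrow> ('a \<Rightarrow> real) set" where
  "span_of R f = {(\<lambda>i. \<Sum>r\<in>R. c r * f r i) | c. True}"

lemma inner_on_commute: "inner_on I x y = inner_on I y x"
  unfolding inner_on_def by (simp add: mult.commute)

lemma inner_on_diff_left: "inner_on I (\<lambda>i. x i - y i) w = inner_on I x w - inner_on I y w"
  unfolding inner_on_def by (simp add: left_diff_distrib sum_subtractf)

lemma inner_on_scale_left: "inner_on I (\<lambda>i. a * x i) w = a * inner_on I x w"
  unfolding inner_on_def by (simp add: sum_distrib_left mult.assoc)

lemma inner_on_diff_right: "inner_on I w (\<lambda>i. x i - y i) = inner_on I w x - inner_on I w y"
  by (simp add: inner_on_commute[of I w] inner_on_diff_left)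

lemma inner_on_unit_left:
  assumes "finite I" "b \<in> I"
  shows "inner_on I (\<lambda>l. if l = b then 1 else 0) w = w b"
proof -
  have "inner_on I (\<lambda>l. if l = b then 1 else 0) w = (\<Sum>l\<in>I. if l = b then w l else 0)"
    unfolding inner_on_def by (rule sum.cong) auto
  then show ?thesis using assms by simp
qed

lemma inner_on_self_eq_0:
  assumes "finite I" "inner_on I u u = 0" "i \<in> I"
  shows "u i = 0"
proof -
  have "\<forall>i\<in>I. u i * u i = 0"
    using assms(1,2) unfolding inner_on_def by (subst sum_nonneg_eq_0_iff[symmetric]) auto
  then show ?thesis using assms(3) by simp
qed

lemma span_ofI: "v = (\<lambda>i. \<Sum>r\<in>R. c r * f r i) \<Longrightarrow> v \<in> span_of R f"
  unfolding span_of_def by blast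

lemma span_of_zero: "(\<lambda>i. 0) \<in> span_of R f"
  by (rule span_ofI[where c = "\<lambda>_. 0"]) simp

lemma span_of_add:
  assumes "v \<in> span_of R f" "w \<in> span_of R f"
  shows "(\<lambda>i. v i + w i) \<in> span_of R f"
proof -
  obtain c d where "v = (\<lambda>i. \<Sum>r\<in>R. c r * f r i)" "w = (\<lambda>i. \<Sum>r\<in>R. d r * f r i)"
    using assms unfolding span_of_def by blast
  then have "(\<lambda>i. v i + w i) = (\<lambda>i. \<Sum>r\<in>R. (c r + d r) * f r i)"
    by (simp add: sum.distrib distrib_right)
  then show ?thesis by (rule span_ofI)
qed

lemma span_of_scale:
  assumes "v \<in> span_of R f"
  shows "(\<lambda>i. a * v i) \<in> span_of R f"
proof -
  obtain c where "v = (\<lambda>i. \<Sum>r\<in>R. c r * f r i)"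
    using assms unfolding span_of_def by blast
  then have "(\<lambda>i. a * v i) = (\<lambda>i. \<Sum>r\<in>R. (a * c r) * f r i)"
    by (simp add: sum_distrib_left mult.assoc)
  then show ?thesis by (rule span_ofI)
qed

lemma span_of_diff:
  assumes "v \<in> span_of R f" "w \<in> span_of R f"
  shows "(\<lambda>i. v i - w i) \<in> span_of R f"
  using span_of_add[OF assms(1) span_of_scale[OF assms(2), of "-1"]] by simp

lemma span_of_sum:
  assumes "finite B" "\<And>b. b \<in> B \<Longrightarrow> g b \<in> span_of R f"
  shows "(\<lambda>i. \<Sum>b\<in>B. a b * g b i) \<in> span_of R f"
  using assms
proof (induction B rule: finite_induct)
  case empty
  then show ?case using span_of_zero by simp
next
  case (insert b B)
  then have "(\<lambda>i. a b * g b i + (\<Sum>b\<in>B. a b * g b i)) \<in> span_of R f"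
    by (intro span_of_add span_of_scale) auto
  then show ?case using insert.hyps by simp
qed

lemma span_of_generator:
  assumes "finite R" "r \<in> R"
  shows "f r \<in> span_of R f"
proof -
  have "(\<Sum>q\<in>R. (if q = r then 1 else 0) * f q i) = f r i" for i
  proof -
    have "(\<Sum>q\<in>R. (if q = r then 1 else 0) * f q i) = (\<Sum>q\<in>R. if q = r then f q i else 0)"
      by (rule sum.cong) auto
    then show ?thesis using assms by simp
  qed
  then show ?thesis by (intro span_ofI[where c = "\<lambda>q. if q = r then 1 else 0"]) simp
qed

lemma span_of_mono:
  assumes "finite R'" "R \<subseteq> R'"
  shows "span_of R f \<subseteq> span_of R' f"
proof
  fix v assume "v \<in> span_of R f"
  then obtain c where c: "v = (\<lambda>i. \<Sum>r\<in>R. c r * f r i)" unfolding span_of_def by blast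
  have "v = (\<lambda>i. \<Sum>r\<in>R'. (if r \<in> R then c r else 0) * f r i)"
    unfolding c using assms
    by (intro ext sum.mono_neutral_cong_left) auto
  then show "v \<in> span_of R' f" by (rule span_ofI)
qed

lemma inner_on_span_of:
  assumes "\<forall>r\<in>R. inner_on I u (f r) = 0" "w \<in> span_of R f"
  shows "inner_on I u w = 0"
proof -
  obtain c where c: "w = (\<lambda>i. \<Sum>r\<in>R. c r * f r i)" using assms(2) unfolding span_of_def by blast
  have "inner_on I u w = (\<Sum>r\<in>R. c r * inner_on I u (f r))"
    unfolding inner_on_def c sum_distrib_left
    by (subst sum.swap) (simp add: mult.left_commute)
  then show ?thesis using assms(1) by simp
qed

lemma inner_on_residual_line:
  assumes "finite I"
  shows "inner_on I (\<lambda>i. z i - inner_on I z u / inner_on I u u * u i) u = 0"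
proof (cases "inner_on I u u = 0")
  case True
  then have "\<forall>i\<in>I. u i = 0" using inner_on_self_eq_0[OF assms] by blast
  then show ?thesis by (simp add: inner_on_def)
next
  case False
  have "inner_on I (\<lambda>i. z i - inner_on I z u / inner_on I u u * u i) u
      = inner_on I z u - inner_on I z u / inner_on I u u * inner_on I u u"
    by (simp only: inner_on_diff_left inner_on_scale_left)
  then show ?thesis using False by simp
qed

lemma orth_residual_exists:
  assumes "finite R" "finite I"
  shows "\<exists>v\<in>span_of R f. \<forall>r\<in>R. inner_on I (\<lambda>i. y i - v i) (f r) = 0"
  using assms(1)
proof (induction R arbitrary: y rule: finite_induct)
  case empty
  show ?case using span_of_zero by blast
next
  case (insert r R)
  have mono: "span_of R f \<subseteq> span_of (insert r R) f"
    using insert.hyps(1) by (intro span_of_mono) auto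
  obtain v0 where v0: "v0 \<in> span_of R f" "\<forall>q\<in>R. inner_on I (\<lambda>i. y i - v0 i) (f q) = 0"
    using insert.IH by blast
  obtain p where p: "p \<in> span_of R f" "\<forall>q\<in>R. inner_on I (\<lambda>i. f r i - p i) (f q) = 0"
    using insert.IH by blast
  \<comment> \<open>Gram-Schmidt step: \<open>u\<close> is the part of \<open>f r\<close> orthogonal to the span of \<open>R\<close>.\<close>
  define u where "u = (\<lambda>i. f r i - p i)"
  define \<alpha> where "\<alpha> = inner_on I (\<lambda>i. y i - v0 i) u / inner_on I u u"
  define v where "v = (\<lambda>i. v0 i + \<alpha> * u i)"
  have "u \<in> span_of (insert r R) f"
    unfolding u_def using insert.hyps(1) p(1) mono
    by (intro span_of_diff span_of_generator) auto
  then have v_span: "v \<in> span_of (insert r R) f"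
    unfolding v_def using v0(1) mono by (intro span_of_add span_of_scale) auto
  have residual: "(\<lambda>i. y i - v i) = (\<lambda>i. (y i - v0 i) - \<alpha> * u i)"
    unfolding v_def by (simp add: algebra_simps)
  have orth_u: "inner_on I (\<lambda>i. y i - v i) u = 0"
    unfolding residual \<alpha>_def by (rule inner_on_residual_line[OF assms(2)])
  have orth_R: "\<forall>q\<in>R. inner_on I (\<lambda>i. y i - v i) (f q) = 0"
    using v0(2) p(2) by (simp add: residual inner_on_diff_left inner_on_scale_left u_def)
  then have "inner_on I (\<lambda>i. y i - v i) p = 0" using p(1) by (rule inner_on_span_of)
  then have "inner_on I (\<lambda>i. y i - v i) (f r) = 0"
    using orth_u inner_on_diff_right[of I _ "f r" p] by (simp add: u_def)
  then show ?case using v_span orth_R by blast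
qed

locale generated_subspace =
  fixes I :: "'a set" and R :: "'r set" and f :: "'r \<Rightarrow> 'a \<Rightarrow> real"
  assumes finite_I: "finite I" and finite_R: "finite R"
    and generator_vanishes: "\<And>r i. i \<notin> I \<Longrightarrow> f r i = 0"
begin

abbreviation V where "V \<equiv> span_of R f"

abbreviation proj where "proj \<equiv> orth_proj I V"

abbreviation proj_matrix where "proj_matrix a b \<equiv> proj (\<lambda>l. if l = b then 1 else 0) a"

definition orth_compl :: "('a \<Rightarrow> real) set" where
  "orth_compl = {u. (\<forall>i. i \<notin> I \<longrightarrow> u i = 0) \<and> (\<forall>r\<in>R. inner_on I u (f r) = 0)}"

lemma span_vanishes: "v \<in> V \<Longrightarrow> i \<notin> I \<Longrightarrow> v i = 0"
  unfolding span_of_def using generator_vanishes by auto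

lemma orth_compl_orth: "u \<in> orth_compl \<Longrightarrow> w \<in> V \<Longrightarrow> inner_on I u w = 0"
  unfolding orth_compl_def using inner_on_span_of by blast

lemma orth_compl_vanishes: "u \<in> orth_compl \<Longrightarrow> i \<notin> I \<Longrightarrow> u i = 0"
  unfolding orth_compl_def by blast

lemma orth_compl_scale: "u \<in> orth_compl \<Longrightarrow> (\<lambda>i. a * u i) \<in> orth_compl"
  unfolding orth_compl_def by (simp add: inner_on_scale_left)

lemma orth_proj_unique:
  assumes "v \<in> V" "v' \<in> V"
    and "\<forall>w\<in>V. inner_on I (\<lambda>i. y i - v i) w = 0" "\<forall>w\<in>V. inner_on I (\<lambda>i. y i - v' i) w = 0"
  shows "v = v'"
proof
  fix i
  define d where "d = (\<lambda>i. v i - v' i)"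
  have d: "d \<in> V" unfolding d_def using assms(1,2) by (rule span_of_diff)
  have "(\<lambda>i. (y i - v' i) - (y i - v i)) = d" unfolding d_def by simp
  then have "inner_on I d d = inner_on I (\<lambda>i. (y i - v' i) - (y i - v i)) d" by (simp only:)
  then have "inner_on I d d = inner_on I (\<lambda>i. y i - v' i) d - inner_on I (\<lambda>i. y i - v i) d"
    by (simp only: inner_on_diff_left)
  then have "inner_on I d d = 0" using assms(3,4) d by simp
  then have "d i = 0"
    using inner_on_self_eq_0[OF finite_I] span_vanishes[OF d] by (cases "i \<in> I") auto
  then show "v i = v' i" unfolding d_def by simp
qed

lemma orth_proj_ex1: "\<exists>!v. v \<in> V \<and> (\<forall>w\<in>V. inner_on I (\<lambda>i. y i - v i) w = 0)"
proof -
  obtain v where v: "v \<in> V" "\<forall>r\<in>R. inner_on I (\<lambda>i. y i - v i) (f r) = 0"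
    using orth_residual_exists[OF finite_R finite_I] by blast
  then have "\<forall>w\<in>V. inner_on I (\<lambda>i. y i - v i) w = 0" using inner_on_span_of by blast
  with v(1) show ?thesis using orth_proj_unique by blast
qed

lemma proj_in_span: "proj y \<in> V"
  and proj_orth: "\<forall>w\<in>V. inner_on I (\<lambda>i. y i - proj y i) w = 0"
  using theI'[OF orth_proj_ex1[of y]] unfolding orth_proj_def inner_on_def by auto

lemma proj_eqI: "v \<in> V \<Longrightarrow> \<forall>w\<in>V. inner_on I (\<lambda>i. y i - v i) w = 0 \<Longrightarrow> proj y = v"
  using orth_proj_unique[OF proj_in_span _ proj_orth] by blast

lemma proj_id: "v \<in> V \<Longrightarrow> proj v = v"
  by (rule proj_eqI) (simp_all add: inner_on_def)

lemma proj_vanishes: "i \<notin> I \<Longrightarrow> proj y i = 0"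
  using span_vanishes[OF proj_in_span] .

lemma residual_in_orth_compl:
  assumes "\<forall>i. i \<notin> I \<longrightarrow> y i = 0"
  shows "(\<lambda>i. y i - proj y i) \<in> orth_compl"
proof -
  have "\<forall>r\<in>R. inner_on I (\<lambda>i. y i - proj y i) (f r) = 0"
    using proj_orth span_of_generator[OF finite_R] by blast
  then show ?thesis using assms proj_vanishes unfolding orth_compl_def by simp
qed

lemma in_span_iff_orth:
  assumes "\<forall>i. i \<notin> I \<longrightarrow> w i = 0"
  shows "w \<in> V \<longleftrightarrow> (\<forall>u\<in>orth_compl. inner_on I u w = 0)"
proof
  assume "\<forall>u\<in>orth_compl. inner_on I u w = 0"
  moreover define u where "u = (\<lambda>i. w i - proj w i)"
  ultimately have "inner_on I u w = 0" using residual_in_orth_compl[OF assms] by blast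
  moreover have "inner_on I u (proj w) = 0"
    using proj_orth[of w] proj_in_span[of w] unfolding u_def by blast
  moreover have "inner_on I u u = inner_on I u w - inner_on I u (proj w)"
    using inner_on_diff_right[of I u w "proj w"] unfolding u_def[symmetric] .
  ultimately have "inner_on I u u = 0" by simp
  then have "w i = proj w i" for i
    using inner_on_self_eq_0[OF finite_I] assms proj_vanishes unfolding u_def
    by (cases "i \<in> I") fastforce+
  then show "w \<in> V" using proj_in_span by (metis ext)
qed (use orth_compl_orth inner_on_commute in blast)

lemma proj_eq_matrix_sum: "proj u a = (\<Sum>b\<in>I. u b * proj_matrix a b)"
proof -
  have unit_inner: "inner_on I (proj (\<lambda>l. if l = b then 1 else 0)) w = w b"
    if "b \<in> I" "w \<in> V" for b w
  proof -
    have "inner_on I (\<lambda>l. if l = b then 1 else 0) w = w b"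
      using finite_I that(1) by (rule inner_on_unit_left)
    then show ?thesis using proj_orth[of "\<lambda>l. if l = b then 1 else 0"] that(2)
      by (simp add: inner_on_diff_left)
  qed
  have "(\<lambda>a. \<Sum>b\<in>I. u b * proj_matrix a b) \<in> V"
    using finite_I proj_in_span by (rule span_of_sum)
  moreover have "inner_on I (\<lambda>a. \<Sum>b\<in>I. u b * proj_matrix a b) w = inner_on I u w" if "w \<in> V" for w
  proof -
    have "inner_on I (\<lambda>a. \<Sum>b\<in>I. u b * proj_matrix a b) w
        = (\<Sum>b\<in>I. u b * inner_on I (proj (\<lambda>l. if l = b then 1 else 0)) w)"
      unfolding inner_on_def sum_distrib_left sum_distrib_right
      by (subst sum.swap) (simp add: mult.assoc)
    also have "\<dots> = inner_on I u w" using unit_inner that by (simp add: inner_on_def)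
    finally show ?thesis .
  qed
  ultimately have "proj u = (\<lambda>a. \<Sum>b\<in>I. u b * proj_matrix a b)"
    by (intro proj_eqI) (auto simp only: inner_on_diff_left diff_self)
  then show ?thesis by simp
qed

end

section \<open>Permuting coordinates\<close>

lemma sum_permutes_inv: "p permutes S \<Longrightarrow> (\<Sum>i\<in>S. g (inv p i)) = sum g S"
  using sum.permute[OF permutes_inv, of p S g] by (simp add: comp_def)

lemma perm_vec_inv: "p permutes S \<Longrightarrow> perm_vec (inv p) v = (\<lambda>i. v (p i))"
  unfolding perm_vec_def by (simp add: permutes_inv_inv)

lemma inner_on_perm_vec:
  assumes "p permutes S"
  shows "inner_on S (perm_vec p u) w = inner_on S u (perm_vec (inv p) w)"
proof -
  have "inner_on S (perm_vec p u) w = (\<Sum>i\<in>S. u (inv p i) * w (p (inv p i)))"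
    unfolding inner_on_def perm_vec_def by (simp add: permutes_inverses[OF assms])
  also have "\<dots> = inner_on S u (perm_vec (inv p) w)"
    unfolding inner_on_def perm_vec_inv[OF assms] by (rule sum_permutes_inv[OF assms])
  finally show ?thesis .
qed

lemma perm_vec_vanishes:
  assumes "p permutes I" "\<forall>i. i \<notin> I \<longrightarrow> u i = 0" "i \<notin> I"
  shows "perm_vec p u i = 0"
  using assms permutes_not_in[OF permutes_inv[OF assms(1)]] unfolding perm_vec_def by simp

lemma perm_vec_invariant_inv:
  assumes "finite S" "p permutes S" "\<forall>v\<in>T. perm_vec p v \<in> T"
  shows "\<forall>v\<in>T. perm_vec (inv p) v \<in> T"
proof
  fix v assume "v \<in> T"
  define q where "q = inv p"
  have q: "q permutes S" unfolding q_def using assms(2) by (rule permutes_inv)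
  have step: "w \<circ> q \<in> T" if "w \<in> T" for w
  proof -
    have "perm_vec p w = w \<circ> q" unfolding perm_vec_def q_def comp_def ..
    then show ?thesis using assms(3) that by metis
  qed
  have iterate: "v \<circ> q ^^ m \<in> T" for m
  proof (induction m)
    case (Suc m)
    have "v \<circ> q ^^ Suc m = (v \<circ> q ^^ m) \<circ> q" by (simp only: funpow_Suc_right comp_assoc)
    then show ?case using step[OF Suc.IH] by (simp only:)
  qed (use \<open>v \<in> T\<close> in simp)
  have "permutation q" using assms(1) q unfolding permutation_permutes by blast
  then obtain n where n: "q ^^ n = id" "n > 0" by (rule permutation_is_nilpotent)
  \<comment> \<open>Since \<open>q\<close> has finite order, \<open>p = inv q\<close> is a power of \<open>q\<close>.\<close>
  have "q \<circ> q ^^ (n - 1) = id" using n by (cases n) auto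
  then have "p = (p \<circ> q) \<circ> q ^^ (n - 1)" by (simp add: comp_assoc)
  also have "\<dots> = q ^^ (n - 1)" unfolding q_def permutes_inv_o(1)[OF assms(2)] by simp
  finally show "perm_vec (inv p) v \<in> T"
    using iterate[of "n - 1"] unfolding perm_vec_inv[OF assms(2)] by (simp add: comp_def)
qed

locale generated_index_subspace = generated_subspace I R f
  for I :: "nat list set" and R :: "'r set" and f :: "'r \<Rightarrow> nat list \<Rightarrow> real"
begin

lemma proj_perm_vec_if_span_invariant:
  assumes p: "p permutes I" and V_inv: "\<forall>v\<in>V. perm_vec p v \<in> V"
  shows "proj (perm_vec p y) = perm_vec p (proj y)"
proof (rule proj_eqI)
  show "perm_vec p (proj y) \<in> V" using V_inv proj_in_span by blast
  show "\<forall>w\<in>V. inner_on I (\<lambda>i. perm_vec p y i - perm_vec p (proj y) i) w = 0"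
  proof
    fix w assume "w \<in> V"
    then have "perm_vec (inv p) w \<in> V"
      using perm_vec_invariant_inv[OF finite_I p V_inv] by blast
    moreover have "(\<lambda>i. perm_vec p y i - perm_vec p (proj y) i) = perm_vec p (\<lambda>i. y i - proj y i)"
      unfolding perm_vec_def ..
    ultimately show "inner_on I (\<lambda>i. perm_vec p y i - perm_vec p (proj y) i) w = 0"
      using proj_orth by (simp add: inner_on_perm_vec[OF p])
  qed
qed

lemma proj_perm_vec_if_matrix_invariant:
  assumes p: "p permutes I"
    and P_inv: "\<forall>a\<in>I. \<forall>b\<in>I. proj_matrix (inv p a) (inv p b) = proj_matrix a b"
  shows "proj (perm_vec p y) = perm_vec p (proj y)"
proof
  fix a
  show "proj (perm_vec p y) a = perm_vec p (proj y) a"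
  proof (cases "a \<in> I")
    case True
    have "proj (perm_vec p y) a = (\<Sum>b\<in>I. y (inv p b) * proj_matrix a b)"
      by (subst proj_eq_matrix_sum) (simp add: perm_vec_def)
    also have "\<dots> = (\<Sum>b\<in>I. y (inv p b) * proj_matrix (inv p a) (inv p b))"
      using P_inv True by (intro sum.cong) auto
    also have "\<dots> = (\<Sum>b\<in>I. y b * proj_matrix (inv p a) b)"
      by (rule sum_permutes_inv[OF p])
    also have "\<dots> = perm_vec p (proj y) a"
      unfolding perm_vec_def by (rule proj_eq_matrix_sum[symmetric])
    finally show ?thesis .
  next
    case False
    then show ?thesis using proj_vanishes perm_vec_vanishes[OF p] by simp
  qed
qed

lemma proj_matrix_invariant_iff:
  assumes p: "p permutes I"
  shows "(\<forall>a\<in>I. \<forall>b\<in>I. proj_matrix (inv p a) (inv p b) = proj_matrix a b) \<longleftrightarrow> (\<forall>v\<in>V. perm_vec p v \<in> V)"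
proof
  assume "\<forall>a\<in>I. \<forall>b\<in>I. proj_matrix (inv p a) (inv p b) = proj_matrix a b"
  then show "\<forall>v\<in>V. perm_vec p v \<in> V"
    using proj_perm_vec_if_matrix_invariant[OF p] proj_id proj_in_span by metis
next
  assume V_inv: "\<forall>v\<in>V. perm_vec p v \<in> V"
  have inv_p: "inv p permutes I" using p by (rule permutes_inv)
  have "\<forall>v\<in>V. perm_vec (inv p) v \<in> V" using perm_vec_invariant_inv[OF finite_I p V_inv] .
  note proj_inv_p = proj_perm_vec_if_span_invariant[OF inv_p this]
  show "\<forall>a\<in>I. \<forall>b\<in>I. proj_matrix (inv p a) (inv p b) = proj_matrix a b"
  proof (intro ballI)
    fix a b
    have unit_inv: "(\<lambda>l. if l = inv p b then 1 else 0) = perm_vec (inv p) (\<lambda>l. if l = b then 1 else 0)"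
      unfolding perm_vec_inv[OF p] by (intro ext) (metis permutes_inverses[OF p])
    have "proj_matrix (inv p a) (inv p b) = perm_vec (inv p) (proj (\<lambda>l. if l = b then 1 else 0)) (inv p a)"
      unfolding unit_inv proj_inv_p ..
    then show "proj_matrix (inv p a) (inv p b) = proj_matrix a b"
      unfolding perm_vec_inv[OF p] by (simp add: permutes_inverses[OF p])
  qed
qed

lemma span_invariant_iff_orth_compl_invariant:
  assumes p: "p permutes I"
  shows "(\<forall>v\<in>V. perm_vec p v \<in> V) \<longleftrightarrow> (\<forall>u\<in>orth_compl. perm_vec p u \<in> orth_compl)"
proof
  assume V_inv: "\<forall>v\<in>V. perm_vec p v \<in> V"
  show "\<forall>u\<in>orth_compl. perm_vec p u \<in> orth_compl"
  proof
    fix u assume u: "u \<in> orth_compl"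
    have "inner_on I (perm_vec p u) (f r) = 0" if "r \<in> R" for r
    proof -
      have "perm_vec (inv p) (f r) \<in> V"
        using perm_vec_invariant_inv[OF finite_I p V_inv] span_of_generator[OF finite_R that] by blast
      then show ?thesis using orth_compl_orth[OF u] by (simp add: inner_on_perm_vec[OF p])
    qed
    then show "perm_vec p u \<in> orth_compl"
      using u perm_vec_vanishes[OF p] unfolding orth_compl_def by simp
  qed
next
  assume W_inv: "\<forall>u\<in>orth_compl. perm_vec p u \<in> orth_compl"
  show "\<forall>v\<in>V. perm_vec p v \<in> V"
  proof
    fix v assume v: "v \<in> V"
    have "inner_on I u (perm_vec p v) = 0" if "u \<in> orth_compl" for u
    proof -
      have "perm_vec (inv p) u \<in> orth_compl"
        using perm_vec_invariant_inv[OF finite_I p W_inv] that by blast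
      have "inner_on I u (perm_vec p v) = inner_on I v (perm_vec (inv p) u)"
        unfolding inner_on_commute[of I u] by (rule inner_on_perm_vec[OF p])
      also have "\<dots> = 0"
        using orth_compl_orth[OF \<open>perm_vec (inv p) u \<in> orth_compl\<close> v]
        by (simp add: inner_on_commute[of I v])
      finally show ?thesis .
    qed
    moreover have "\<forall>i. i \<notin> I \<longrightarrow> perm_vec p v i = 0"
      using perm_vec_vanishes[OF p] span_vanishes[OF v] by blast
    ultimately show "perm_vec p v \<in> V" using in_span_iff_orth by blast
  qed
qed

end

section \<open>Boxes cut by an affine subspace\<close>

lemma small_multiple_bounded:
  fixes u :: "'a \<Rightarrow> real"
  assumes "finite I" "m > 0"
  obtains \<epsilon> where "\<epsilon> > 0" "\<And>i. i \<in> I \<Longrightarrow> \<bar>\<epsilon> * u i\<bar> \<le> m"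
proof -
  define M where "M = 1 + (\<Sum>i\<in>I. \<bar>u i\<bar>)"
  have M: "M > 0" unfolding M_def by (simp add: add_pos_nonneg sum_nonneg)
  have "\<bar>m / M * u i\<bar> \<le> m" if "i \<in> I" for i
  proof -
    have "\<bar>u i\<bar> \<le> M" unfolding M_def using member_le_sum[OF that, of "\<lambda>i. \<bar>u i\<bar>"] assms(1) by simp
    then have "m * \<bar>u i\<bar> \<le> m * M" using assms(2) by simp
    then show ?thesis using M assms(2) by (simp add: abs_mult divide_le_eq)
  qed
  then show thesis using that[of "m / M"] M assms(2) by simp
qed

definition box_slice :: "nat list set \<Rightarrow> real \<Rightarrow> real \<Rightarrow> (nat list \<Rightarrow> real) set \<Rightarrow> (nat list \<Rightarrow> real) set"
  where "box_slice I b c W = {x. (\<forall>i. i \<notin> I \<longrightarrow> x i = 0) \<and> (\<forall>i\<in>I. 0 \<le> x i \<and> x i \<le> b)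
                              \<and> (\<lambda>i. x i - (if i \<in> I then c else 0)) \<in> W}"

lemma perm_vec_minus_const:
  assumes "p permutes I"
  shows "perm_vec p (\<lambda>i. x i - (if i \<in> I then c else 0)) = (\<lambda>i. perm_vec p x i - (if i \<in> I then c else 0))"
  unfolding perm_vec_def using permutes_in_image[OF permutes_inv[OF assms]] by simp

lemma perm_vec_box_slice:
  assumes p: "p permutes I" and W_inv: "\<forall>u\<in>W. perm_vec p u \<in> W" and x: "x \<in> box_slice I b c W"
  shows "perm_vec p x \<in> box_slice I b c W"
proof -
  have "\<forall>i\<in>I. 0 \<le> perm_vec p x i \<and> perm_vec p x i \<le> b"
    using x permutes_in_image[OF permutes_inv[OF p]] unfolding box_slice_def perm_vec_def by blast
  moreover have "(\<lambda>i. perm_vec p x i - (if i \<in> I then c else 0)) \<in> W"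
    using W_inv x unfolding perm_vec_minus_const[OF p, symmetric] box_slice_def by blast
  moreover have "\<forall>i. i \<notin> I \<longrightarrow> perm_vec p x i = 0"
    using x perm_vec_vanishes[OF p] unfolding box_slice_def by blast
  ultimately show ?thesis unfolding box_slice_def by blast
qed

lemma perm_vec_direction_if_box_slice_invariant:
  assumes "finite I" and p: "p permutes I" and "0 < c" "c < b"
    and W_vanishes: "\<forall>u\<in>W. \<forall>i. i \<notin> I \<longrightarrow> u i = 0"
    and W_scale: "\<forall>u\<in>W. \<forall>a. (\<lambda>i. a * u i) \<in> W"
    and F_inv: "\<forall>x\<in>box_slice I b c W. perm_vec p x \<in> box_slice I b c W"
    and u: "u \<in> W"
  shows "perm_vec p u \<in> W"
proof -
  \<comment> \<open>The constant vector \<open>c\<close> lies in the interior of the box, so \<open>c + \<epsilon> u\<close> stays in it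
    for small \<open>\<epsilon>\<close>.\<close>
  obtain \<epsilon> where \<epsilon>: "\<epsilon> > 0" "\<And>i. i \<in> I \<Longrightarrow> \<bar>\<epsilon> * u i\<bar> \<le> min c (b - c)"
    using small_multiple_bounded[OF \<open>finite I\<close>] \<open>0 < c\<close> \<open>c < b\<close> by (metis diff_gt_0_iff_gt min_def)
  define x where "x = (\<lambda>i. (if i \<in> I then c else 0) + \<epsilon> * u i)"
  have x_diff: "(\<lambda>i. x i - (if i \<in> I then c else 0)) = (\<lambda>i. \<epsilon> * u i)" unfolding x_def by simp
  have "x \<in> box_slice I b c W"
    unfolding box_slice_def mem_Collect_eq x_diff
  proof (intro conjI)
    show "\<forall>i. i \<notin> I \<longrightarrow> x i = 0" using W_vanishes u by (simp add: x_def)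
    show "\<forall>i\<in>I. 0 \<le> x i \<and> x i \<le> b"
    proof
      fix i assume "i \<in> I"
      then have "\<bar>\<epsilon> * u i\<bar> \<le> min c (b - c)" by (rule \<epsilon>(2))
      then show "0 \<le> x i \<and> x i \<le> b" using \<open>i \<in> I\<close> by (simp add: x_def abs_le_iff)
    qed
    show "(\<lambda>i. \<epsilon> * u i) \<in> W" using W_scale u by blast
  qed
  then have "(\<lambda>i. perm_vec p x i - (if i \<in> I then c else 0)) \<in> W"
    using F_inv unfolding box_slice_def by blast
  then have "(\<lambda>i. \<epsilon> * perm_vec p u i) \<in> W"
    unfolding perm_vec_minus_const[OF p, symmetric] x_diff by (simp add: perm_vec_def)
  from W_scale[rule_format, OF this, of "1 / \<epsilon>"] show "perm_vec p u \<in> W" using \<epsilon>(1) by simp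
qed

section \<open>Cells and the row space of \<open>A'\<close>\<close>

lemma finite_idx: "finite (idx k s)"
proof -
  have "idx k s \<subseteq> {xs. set xs \<subseteq> {0..<s} \<and> length xs = k}"
    unfolding idx_def by (auto simp: in_set_conv_nth)
  then show ?thesis by (rule finite_subset) (simp add: finite_lists_length_eq)
qed

lemma finite_Aprime_rows: "finite (Aprime_rows k s t)"
proof -
  have "Aprime_rows k s t \<subseteq> Sigma (Pow {0..<k}) (\<lambda>J. PiE J (\<lambda>_. {0..s-2}))"
    unfolding Aprime_rows_def by auto
  moreover have "finite (Sigma (Pow {0..<k}) (\<lambda>J. PiE J (\<lambda>_. {0..s-2})))"
    by (intro finite_SigmaI finite_PiE) (auto intro: finite_subset)
  ultimately show ?thesis by (rule finite_subset)
qed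

lemma cell_subset_idx: "cell k s J a \<subseteq> idx k s"
  unfolding cell_def by auto

lemma finite_cell: "finite (cell k s J a)"
  using finite_subset[OF cell_subset_idx finite_idx] .

lemma cell_restrict: "cell k s J (restrict a J) = cell k s J a"
  unfolding cell_def by auto

lemma Aprime_row_vanishes: "i \<notin> idx k s \<Longrightarrow> Aprime_row k s r i = 0"
  unfolding Aprime_row_def cell_def by auto

lemma inner_on_Aprime_row: "inner_on (idx k s) u (Aprime_row k s (J, a)) = sum u (cell k s J a)"
proof -
  have "inner_on (idx k s) u (Aprime_row k s (J, a)) = (\<Sum>i\<in>idx k s. if i \<in> cell k s J a then u i else 0)"
    unfolding inner_on_def Aprime_row_def by (rule sum.cong) auto
  also have "\<dots> = sum u (idx k s \<inter> cell k s J a)" by (rule sum.inter_restrict[OF finite_idx, symmetric])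
  finally show ?thesis using cell_subset_idx by (simp add: Int_absorb1)
qed

lemma obtain_coord_notin:
  assumes "J \<subseteq> {0..<k}" "card J < k"
  obtains j where "j < k" "j \<notin> J"
proof -
  have "\<not> {0..<k} \<subseteq> J"
  proof
    assume "{0..<k} \<subseteq> J"
    then have "card {0..<k} \<le> card J" using assms(1) by (intro card_mono) (auto intro: finite_subset)
    then show False using assms(2) by simp
  qed
  then obtain j where "j \<in> {0..<k}" "j \<notin> J" by blast
  then show thesis using that by simp
qed

lemma sum_cell_split:
  assumes "j < k" "j \<notin> J"
  shows "sum u (cell k s J a) = (\<Sum>v<s. sum u (cell k s (insert j J) (a(j := v))))"
proof -
  have "sum u (cell k s J a) = (\<Sum>v<s. sum u {i \<in> cell k s J a. i ! j = v})"
    by (rule sum.group[symmetric, OF finite_cell]) (use assms(1) in \<open>auto simp: cell_def idx_def\<close>)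
  also have "\<dots> = (\<Sum>v<s. sum u (cell k s (insert j J) (a(j := v))))"
  proof (rule sum.cong)
    show "sum u {i \<in> cell k s J a. i ! j = v} = sum u (cell k s (insert j J) (a(j := v)))" for v
      using assms(2) by (intro arg_cong[where f = "sum u"]) (auto simp: cell_def)
  qed simp
  finally show ?thesis .
qed

lemma card_cell:
  assumes "J \<subseteq> {0..<k}" "\<forall>j\<in>J. a j < s"
  shows "card (cell k s J a) = s ^ (k - card J)"
  using assms
proof (induction "k - card J" arbitrary: J a)
  case 0
  have "card J \<le> k" using card_mono[OF _ 0(2)] by simp
  then have "J = {0..<k}" using 0 by (intro card_subset_eq) auto
  then have "cell k s J a = {map a [0..<k]}"
    using 0(3) by (auto simp: cell_def idx_def intro: nth_equalityI)
  then show ?case using 0(1) by simp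
next
  case (Suc d)
  have fin: "finite J" using Suc.prems(1) finite_subset by blast
  have "card J < k" using Suc.hyps(2) by simp
  then obtain j where j: "j < k" "j \<notin> J" using obtain_coord_notin[OF Suc.prems(1)] by blast
  have card_refined: "card (cell k s (insert j J) (a(j := v))) = s ^ d" if "v < s" for v
  proof -
    have d: "d = k - card (insert j J)" using Suc.hyps(2) fin j(2) by simp
    have "insert j J \<subseteq> {0..<k}" "\<forall>i\<in>insert j J. (a(j := v)) i < s"
      using Suc.prems j(1) that by auto
    from Suc.hyps(1)[OF d this] show ?thesis using d unfolding fun_upd_def by simp
  qed
  have "card (cell k s J a) = (\<Sum>v<s. card (cell k s (insert j J) (a(j := v))))"
    using sum_cell_split[OF j, of "\<lambda>_. 1::nat" s a] by simp
  also have "\<dots> = (\<Sum>v<s. s ^ d)" using card_refined by simp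
  also have "\<dots> = s ^ (k - card J)" by (simp flip: Suc.hyps(2))
  finally show ?case .
qed

lemma sum_cell_eq_0_below:
  assumes "t \<le> k"
    and top: "\<And>J a. J \<subseteq> {0..<k} \<Longrightarrow> card J = t \<Longrightarrow> a \<in> PiE J (\<lambda>_. {0..<s}) \<Longrightarrow> sum u (cell k s J a) = 0"
  shows "J \<subseteq> {0..<k} \<Longrightarrow> card J \<le> t \<Longrightarrow> \<forall>j\<in>J. a j < s \<Longrightarrow> sum u (cell k s J a) = 0"
proof (induction "t - card J" arbitrary: J a)
  case 0
  then have "sum u (cell k s J (restrict a J)) = 0" by (intro top) auto
  then show ?case by (simp add: cell_restrict)
next
  case (Suc d)
  have fin: "finite J" using Suc.prems(1) finite_subset by blast
  have "card J < k" using Suc.hyps(2) assms(1) by simp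
  then obtain j where j: "j < k" "j \<notin> J" using obtain_coord_notin[OF Suc.prems(1)] by blast
  have "sum u (cell k s (insert j J) (a(j := v))) = 0" if "v < s" for v
  proof -
    have d: "d = t - card (insert j J)" using Suc.hyps(2) fin j(2) by simp
    have "insert j J \<subseteq> {0..<k}" "card (insert j J) \<le> t" "\<forall>i\<in>insert j J. (a(j := v)) i < s"
      using Suc.prems Suc.hyps(2) fin j that by auto
    from Suc.hyps(1)[OF d this] show ?thesis unfolding fun_upd_def .
  qed
  then show ?case unfolding sum_cell_split[OF j, of u s a] by (intro sum.neutral) auto
qed

lemma Aprime_row_split:
  assumes "j < k" "j \<notin> J"
  shows "Aprime_row k s (J, a) i = (\<Sum>v<s. Aprime_row k s (insert j J, a(j := v)) i)"
proof -
  \<comment> \<open>Evaluating a cell indicator at \<open>i\<close> is summing the unit vector at \<open>i\<close> over the cell.\<close>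
  have indicator_as_sum: "Aprime_row k s (J', a') i = (\<Sum>l\<in>cell k s J' a'. if l = i then 1 else 0)"
    for J' a' unfolding Aprime_row_def using finite_cell by simp
  show ?thesis unfolding indicator_as_sum by (rule sum_cell_split[OF assms])
qed

lemma row_space_eq_span_of: "row_space k s t = span_of (Aprime_rows k s t) (Aprime_row k s)"
  unfolding row_space_def span_of_def ..

lemma Aprime_row_top_value:
  assumes "0 < s" "j < k" "j \<in> J" "a j = s - 1"
  shows "Aprime_row k s (J, a)
    = (\<lambda>i. Aprime_row k s (J - {j}, a) i - (\<Sum>v<s - 1. Aprime_row k s (J, a(j := v)) i))"
proof
  fix i
  have "{..<s} = insert (s - 1) {..<s - 1}" "a(j := s - 1) = a" using assms(1,4) by auto
  then have "(\<Sum>v<s. Aprime_row k s (J, a(j := v)) i)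
      = Aprime_row k s (J, a) i + (\<Sum>v<s - 1. Aprime_row k s (J, a(j := v)) i)"
    by simp
  moreover have "Aprime_row k s (J - {j}, a) i = (\<Sum>v<s. Aprime_row k s (J, a(j := v)) i)"
    using Aprime_row_split[OF assms(2), of "J - {j}" s a i] assms(3) by (simp add: insert_absorb)
  ultimately show "Aprime_row k s (J, a) i
      = Aprime_row k s (J - {j}, a) i - (\<Sum>v<s - 1. Aprime_row k s (J, a(j := v)) i)"
    by simp
qed

lemma Aprime_row_in_row_space:
  assumes "2 \<le> s"
  shows "J \<subseteq> {0..<k} \<Longrightarrow> card J \<le> t \<Longrightarrow> \<forall>j\<in>J. a j < s \<Longrightarrow> Aprime_row k s (J, a) \<in> row_space k s t"
proof (induction "card {j\<in>J. a j = s - 1}" arbitrary: J a rule: less_induct)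
  case less
  have fin: "finite J" using less.prems(1) finite_subset by blast
  show ?case
  proof (cases "\<exists>j\<in>J. a j = s - 1")
    case False
    then have "(J, restrict a J) \<in> Aprime_rows k s t"
      using less.prems unfolding Aprime_rows_def by force
    then have "Aprime_row k s (J, restrict a J) \<in> row_space k s t"
      unfolding row_space_eq_span_of by (rule span_of_generator[OF finite_Aprime_rows])
    then show ?thesis by (simp add: Aprime_row_def cell_restrict)
  next
    case True
    then obtain j where j: "j \<in> J" "a j = s - 1" by blast
    have jk: "j < k" using j(1) less.prems(1) by auto
    have s_pos: "0 < s" using assms by simp
    \<comment> \<open>Both the coarser cell and the cells with a smaller value in coordinate \<open>j\<close> have
      fewer coordinates equal to \<open>s - 1\<close>.\<close>
    have "Aprime_row k s (J - {j}, a) \<in> row_space k s t"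
    proof (rule less.hyps)
      show "card {j' \<in> J - {j}. a j' = s - 1} < card {j' \<in> J. a j' = s - 1}"
        using fin j by (intro psubset_card_mono) auto
    qed (use less.prems card_Diff1_le[of J j] in auto)
    moreover have "Aprime_row k s (J, a(j := v)) \<in> row_space k s t" if "v < s - 1" for v
    proof (rule less.hyps)
      show "card {j' \<in> J. (a(j := v)) j' = s - 1} < card {j' \<in> J. a j' = s - 1}"
        using fin j that by (intro psubset_card_mono) auto
    qed (use less.prems that in auto)
    then have "(\<lambda>i. \<Sum>v<s - 1. 1 * Aprime_row k s (J, a(j := v)) i) \<in> row_space k s t"
      unfolding row_space_eq_span_of by (intro span_of_sum) auto
    ultimately show ?thesis
      unfolding Aprime_row_top_value[where a = a, OF s_pos jk j] row_space_eq_span_of by (simp add: span_of_diff)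
  qed
qed

section \<open>The two symmetry groups\<close>

interpretation Aprime: generated_index_subspace "idx k s" "Aprime_rows k s t" "Aprime_row k s"
  for k s t
  by unfold_locales (auto simp: finite_idx finite_Aprime_rows Aprime_row_vanishes)

lemma orth_compl_Aprime_iff:
  assumes "2 \<le> s" "t \<le> k"
  shows "u \<in> Aprime.orth_compl k s t \<longleftrightarrow> (\<forall>i. i \<notin> idx k s \<longrightarrow> u i = 0) \<and>
    (\<forall>J a. J \<subseteq> {0..<k} \<and> card J = t \<and> a \<in> PiE J (\<lambda>_. {0..<s}) \<longrightarrow> sum u (cell k s J a) = 0)"
proof -
  have "(\<forall>r\<in>Aprime_rows k s t. inner_on (idx k s) u (Aprime_row k s r) = 0) \<longleftrightarrow>
    (\<forall>J a. J \<subseteq> {0..<k} \<and> card J = t \<and> a \<in> PiE J (\<lambda>_. {0..<s}) \<longrightarrow> sum u (cell k s J a) = 0)"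
  proof
    assume "\<forall>r\<in>Aprime_rows k s t. inner_on (idx k s) u (Aprime_row k s r) = 0"
    moreover have "Aprime_row k s (J, a) \<in> row_space k s t"
      if "J \<subseteq> {0..<k}" "card J = t" "a \<in> PiE J (\<lambda>_. {0..<s})" for J a
      using that by (intro Aprime_row_in_row_space[OF assms(1)]) auto
    ultimately show "\<forall>J a. J \<subseteq> {0..<k} \<and> card J = t \<and> a \<in> PiE J (\<lambda>_. {0..<s}) \<longrightarrow> sum u (cell k s J a) = 0"
      unfolding row_space_eq_span_of by (metis inner_on_span_of inner_on_Aprime_row)
  next
    assume "\<forall>J a. J \<subseteq> {0..<k} \<and> card J = t \<and> a \<in> PiE J (\<lambda>_. {0..<s}) \<longrightarrow> sum u (cell k s J a) = 0"
    then have "sum u (cell k s J a) = 0" if "(J, a) \<in> Aprime_rows k s t" for J a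
      using that assms sum_cell_eq_0_below[OF assms(2), of s u J a]
      unfolding Aprime_rows_def by (force simp: PiE_iff)
    then show "\<forall>r\<in>Aprime_rows k s t. inner_on (idx k s) u (Aprime_row k s r) = 0"
      by (auto simp: inner_on_Aprime_row)
  qed
  then show ?thesis unfolding Aprime.orth_compl_def by simp
qed

lemma sum_const_on_cell:
  assumes "J \<subseteq> {0..<k}" "card J = t" "a \<in> PiE J (\<lambda>_. {0..<s})"
  shows "(\<Sum>i\<in>cell k s J a. if i \<in> idx k s then c else 0) = real (s ^ (k - t)) * c"
proof -
  have "(\<Sum>i\<in>cell k s J a. if i \<in> idx k s then c else 0) = real (card (cell k s J a)) * c"
    using cell_subset_idx by (simp add: subset_iff)
  then show ?thesis using card_cell[of J k a s] assms by (auto simp: PiE_iff)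
qed

lemma LP_feasible_eq_box_slice:
  assumes "2 \<le> s" "t \<le> k"
  shows "LP_feasible k s t (real (s ^ (k - t)) * c) b = box_slice (idx k s) b c (Aprime.orth_compl k s t)"
  unfolding LP_feasible_def box_slice_def orth_compl_Aprime_iff[OF assms]
  by (auto simp: sum_subtractf sum_const_on_cell)

lemma G_LP_eq:
  assumes "2 \<le> s" "t \<le> k" "0 < c" "c < b"
  shows "G_LP k s t (real (s ^ (k - t)) * c) b =
    {p. p permutes idx k s \<and> (\<forall>u\<in>Aprime.orth_compl k s t. perm_vec p u \<in> Aprime.orth_compl k s t)}"
  unfolding G_LP_def LP_feasible_eq_box_slice[OF assms(1,2)]
proof (intro Collect_cong conj_cong refl)
  fix p assume p: "p permutes idx k s"
  let ?W = "Aprime.orth_compl k s t"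
  let ?F = "box_slice (idx k s) b c ?W"
  have W_vanishes: "\<forall>u\<in>?W. \<forall>i. i \<notin> idx k s \<longrightarrow> u i = 0"
    using Aprime.orth_compl_vanishes by blast
  have W_scale: "\<forall>u\<in>?W. \<forall>a. (\<lambda>i. a * u i) \<in> ?W"
    using Aprime.orth_compl_scale by blast
  have "(\<Sum>i\<in>idx k s. perm_vec p x i) = (\<Sum>i\<in>idx k s. x i)" for x
    unfolding perm_vec_def using p by (rule sum_permutes_inv)
  moreover have "(\<forall>x\<in>?F. perm_vec p x \<in> ?F)
    \<longleftrightarrow> (\<forall>u\<in>?W. perm_vec p u \<in> ?W)"
    using perm_vec_box_slice[OF p]
      perm_vec_direction_if_box_slice_invariant[OF finite_idx p assms(3,4) W_vanishes W_scale]
    by blast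
  ultimately show "(\<forall>x\<in>?F. perm_vec p x \<in> ?F \<and> (\<Sum>i\<in>idx k s. perm_vec p x i) = (\<Sum>i\<in>idx k s. x i))
    \<longleftrightarrow> (\<forall>u\<in>?W. perm_vec p u \<in> ?W)"
    by simp
qed

lemma G_mat_P_Aprime_eq:
  "G_mat k s (P_Aprime k s t) =
    {p. p permutes idx k s \<and> (\<forall>v\<in>row_space k s t. perm_vec p v \<in> row_space k s t)}"
  unfolding G_mat_def P_Aprime_def row_space_eq_span_of
  using Aprime.proj_matrix_invariant_iff by blast

theorem theorem7:
  fixes k s t N pmax :: nat
  assumes "s \<ge> 2" and "1 \<le> t" and "t \<le> k - 1"
    and "N > 0" and "s ^ t dvd N"
    and "pmax > 0"
    and "real N / real s ^ t / real s ^ (k - t) \<le> real pmax"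
    and "real pmax \<le> real N / real s ^ t"
    and "real pmax \<noteq> real N / real s ^ t / real s ^ (k - t)"
  shows "G_LP k s t (real N / real s ^ t) (real pmax) = G_mat k s (P_Aprime k s t)"
proof -
  define c where "c = real N / real s ^ t / real s ^ (k - t)"
  have t_le_k: "t \<le> k" using assms(2,3) by linarith
  have lam: "real N / real s ^ t = real (s ^ (k - t)) * c"
    unfolding c_def using assms(1) by simp
  have "0 < c" unfolding c_def using assms(1,4) by simp
  moreover have "c < real pmax" unfolding c_def using assms(7,9) by simp
  ultimately have "G_LP k s t (real N / real s ^ t) (real pmax) =
      {p. p permutes idx k s \<and> (\<forall>u\<in>Aprime.orth_compl k s t. perm_vec p u \<in> Aprime.orth_compl k s t)}"
    unfolding lam by (rule G_LP_eq[OF assms(1) t_le_k])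
  also have "\<dots> = {p. p permutes idx k s \<and> (\<forall>v\<in>row_space k s t. perm_vec p v \<in> row_space k s t)}"
    unfolding row_space_eq_span_of using Aprime.span_invariant_iff_orth_compl_invariant by blast
  also have "\<dots> = G_mat k s (P_Aprime k s t)"
    by (rule G_mat_P_Aprime_eq[symmetric])
  finally show ?thesis .
qed

end
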